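(* For every countable ordinal $\alpha$: $\mathfrak{D}_{\alpha+1} = \mathfrak{D}(\overline{\mathfrak{D}_\alpha})$, and more generally, for every countable ordinal $\alpha \geq 1$, $\mathfrak{D}_{\alpha} = \mathfrak{D}\left(\overline{\bigcup_{\lambda < \alpha} \mathfrak{D}_\lambda}\right)$.
   Context: All sets are subsets of Cantor space $\{0,1\}^\mathbb{N}$. For a countable ordinal $\alpha$, let $\mathrm{par}(\alpha)=0$ if $\alpha=\beta+2n$ for some limit ordinal $\beta$ (with $0$ counted as a limit) and some $n\in\mathbb{N}$, and $\mathrm{par}(\alpha)=1$ otherwise. The class $\mathfrak{D}_\alpha$ (level $\alpha$ of the Hausdorff difference hierarchy) consists of all sets $D$ for which there is a family $(U_\lambda)_{\lambda<\alpha}$ of open sets with: $x\in D \iff \mathrm{par}(\inf\{\beta \mid x\in U_\beta\})\neq \mathrm{par}(\alpha)$, where $\inf\emptyset=\alpha$. (So $\mathfrak{D}_0=\{\emptyset\}$, $\mathfrak{D}_1$ = open sets.) For a class $\Gamma$ of sets, $\overline{\Gamma}=\{U^C \mid U\in\Gamma\}$, and $\mathfrak{D}(\Gamma)$ is the class of all sets $\bigcup_{i\in I} v_iU_i$ where $I\subseteq\mathbb{N}$, each $v_i\in\{0,1\}^*$, each $U_i\in\Gamma$, the words $v_i$ are pairwise prefix-incomparable, and $vU=\{vp\mid p\in U\}$. *)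

theory Defs
  imports "HOL-Analysis.Analysis" "HOL-Library.Sublist" "HOL-Library.Countable"
begin

text \<open>Cantor space: the type nat \<Rightarrow> bool with the product topology of the
discrete (order) topology on bool (library instance from Function_Topology).
Countable ordinals: ordinals are represented as elements of an arbitrary
countable well-ordered type; the ordinal represented by a is the order type of
the initial segment of elements below a.\<close>

type_synonym cantor = "nat \<Rightarrow> bool"

definition is_succ :: "'a::wellorder \<Rightarrow> 'a \<Rightarrow> bool" where
  "is_succ x y \<longleftrightarrow> x < y \<and> \<not> (\<exists>z. x < z \<and> z < y)"

text \<open>Limit ordinal (0 counted as limit): no immediate predecessor.\<close>
definition is_limit :: "'a::wellorder \<Rightarrow> bool" where
  "is_limit l \<longleftrightarrow> \<not> (\<exists>x. is_succ x l)"

inductive plus_fin :: "'a::wellorder \<Rightarrow> nat \<Rightarrow> 'a \<Rightarrow> bool" where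
  base: "plus_fin l 0 l"
| step: "plus_fin l n x \<Longrightarrow> is_succ x y \<Longrightarrow> plus_fin l (Suc n) y"

definition par :: "'a::wellorder \<Rightarrow> nat" where
  "par b = (if \<exists>l n. is_limit l \<and> even n \<and> plus_fin l n b then 0 else 1)"

definition rank_in :: "('a::wellorder \<Rightarrow> cantor set) \<Rightarrow> 'a \<Rightarrow> cantor \<Rightarrow> 'a" where
  "rank_in U a x = (if \<exists>b<a. x \<in> U b then (LEAST b. b < a \<and> x \<in> U b) else a)"

definition Diff_level :: "'a::{wellorder,countable} \<Rightarrow> cantor set set" where
  "Diff_level a = {D. \<exists>U. (\<forall>b<a. open (U b)) \<and>
       D = {x. par (rank_in U a x) \<noteq> par a}}"

definition co_class :: "cantor set set \<Rightarrow> cantor set set" where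
  "co_class \<Gamma> = {- U | U. U \<in> \<Gamma>}"

definition prepend :: "bool list \<Rightarrow> cantor \<Rightarrow> cantor" where
  "prepend v p = (\<lambda>n. if n < length v then v ! n else p (n - length v))"

definition D_of :: "cantor set set \<Rightarrow> cantor set set" where
  "D_of \<Gamma> = {(\<Union>i\<in>I. prepend (v i) ` (U i)) | I v U.
       I \<subseteq> (UNIV :: nat set) \<and> (\<forall>i\<in>I. U i \<in> \<Gamma>) \<and>
       (\<forall>i\<in>I. \<forall>j\<in>I. i \<noteq> j \<longrightarrow> \<not> prefix (v i) (v j) \<and> \<not> prefix (v j) (v i))}"

end

theory Submission
  imports Defs
begin

(* Write S = {x. par (rank_in U a x) \<noteq> par a} for a set of level a given by open
   sets U b (b < a), and call this set diff_set U a.  Both parts of the theorem follow from the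
   single identity  Diff_level a = D_of (co_class (\<Union>b<a. Diff_level b))  for every a, because
   below a successor a' of a the levels are increasing and the union collapses to Diff_level a.

   "\<supseteq>": the complement of a set of level b < a has level b+1 \<le> a, levels are monotone, and
   every level is closed under D_of (glue the witnessing families of the pieces together).

   "\<subseteq>": a point x of S lies in U r for r = rank_in U a x < a, hence so does a whole cylinder
   around x.  The minimal words w whose cylinder is contained in some U m (m < a) form a prefix-free
   set covering S, and the section {p. prepend w p \<in> S} of S over such a w is the complement of a
   set of level b for any b \<in> [m, a) of parity opposite to a: all its points have rank \<le> m. *)


section \<open>Cylinders and prefixing in Cantor space\<close>

definition cyl :: "bool list \<Rightarrow> cantor set" where
  "cyl w = {y. \<forall>k<length w. y k = w ! k}"

definition pre :: "nat \<Rightarrow> cantor \<Rightarrow> bool list" where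
  "pre n x = map x [0..<n]"

definition drop_seq :: "nat \<Rightarrow> cantor \<Rightarrow> cantor" where
  "drop_seq k x = (\<lambda>n. x (n + k))"

lemma continuous_prepend: "continuous_on UNIV (prepend w)"
proof (rule continuous_on_coordinatewise_then_product)
  fix i show "continuous_on UNIV (\<lambda>p. prepend w p i)"
    by (cases "i < length w") (simp_all add: prepend_def continuous_on_const)
qed

lemma continuous_drop_seq: "continuous_on UNIV (drop_seq k)"
  unfolding drop_seq_def by (intro continuous_on_coordinatewise_then_product) auto

lemma open_cyl: "open (cyl w)"
proof -
  have "cyl w = {f. \<forall>i\<in>{..<length w}. f (id i) \<in> {w!i}}" by (auto simp: cyl_def)
  moreover have "open {f::cantor. \<forall>i\<in>{..<length w}. f (id i) \<in> {w!i}}"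
    by (rule product_topology_basis') (auto simp: open_discrete)
  ultimately show ?thesis by simp
qed

lemma cyl_pre_self: "x \<in> cyl (pre n x)"
  by (simp add: cyl_def pre_def)

lemma length_pre [simp]: "length (pre n x) = n"
  by (simp add: pre_def)

lemma open_contains_cyl:
  assumes "open (U::cantor set)" "x \<in> U"
  shows "\<exists>n. cyl (pre n x) \<subseteq> U"
proof -
  from \<open>open U\<close> have "openin (product_topology (\<lambda>i. euclidean) UNIV) U"
    by (simp add: open_fun_def)
  then obtain V where fin: "finite {i. V i \<noteq> (UNIV::bool set)}"
    and xin: "x \<in> PiE UNIV V" and sub: "PiE UNIV V \<subseteq> U"
    using \<open>x \<in> U\<close> unfolding openin_product_topology_alt by auto
  from finite_nat_bounded[OF fin] obtain n where n: "{i. V i \<noteq> UNIV} \<subseteq> {..<n}" by blast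
  have "y \<in> PiE UNIV V" if "y \<in> cyl (pre n x)" for y
  proof -
    have "\<forall>k<n. y k = x k" using that by (simp add: cyl_def pre_def)
    moreover have "V i = UNIV" if "\<not> i < n" for i
      using n that by blast
    ultimately have "y i \<in> V i" for i
      using xin by (cases "i < n") (auto simp: PiE_UNIV_domain)
    then show ?thesis by (simp add: PiE_UNIV_domain)
  qed
  then show ?thesis using sub by blast
qed

lemma prepend_in_cyl: "prepend w p \<in> cyl w"
  by (simp add: cyl_def prepend_def)

lemma prepend_drop_seq: "x \<in> cyl w \<Longrightarrow> prepend w (drop_seq (length w) x) = x"
  by (auto simp: prepend_def drop_seq_def cyl_def)

lemma drop_seq_prepend: "drop_seq (length w) (prepend w p) = p"
  by (simp add: prepend_def drop_seq_def)

lemma prepend_inj: "prepend w p = prepend w q \<Longrightarrow> p = q"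
  by (metis drop_seq_prepend)

lemma prepend_eq_imp_prefix:
  assumes "prepend v p = prepend w q" "length v \<le> length w"
  shows "prefix v w"
proof -
  have "v = take (length v) w"
  proof (rule nth_equalityI)
    show "length v = length (take (length v) w)" using assms(2) by simp
    fix k assume "k < length v"
    then have "prepend v p k = prepend w q k" using assms(1) by simp
    then show "v ! k = take (length v) w ! k"
      using \<open>k < length v\<close> assms(2) by (simp add: prepend_def)
  qed
  then show ?thesis by (metis take_is_prefix)
qed

lemma prepend_eq_imp_comparable: "prepend v p = prepend w q \<Longrightarrow> prefix v w \<or> prefix w v"
  by (metis nle_le prepend_eq_imp_prefix)

lemma prepend_image: "prepend w ` V = cyl w \<inter> drop_seq (length w) -` V"
proof
  show "prepend w ` V \<subseteq> cyl w \<inter> drop_seq (length w) -` V"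
    using prepend_in_cyl drop_seq_prepend by auto
  show "cyl w \<inter> drop_seq (length w) -` V \<subseteq> prepend w ` V"
  proof
    fix x assume "x \<in> cyl w \<inter> drop_seq (length w) -` V"
    then have "x = prepend w (drop_seq (length w) x)" "drop_seq (length w) x \<in> V"
      using prepend_drop_seq by auto
    then show "x \<in> prepend w ` V" by (rule image_eqI)
  qed
qed

lemma open_prepend_image: "open V \<Longrightarrow> open (prepend w ` V)"
  unfolding prepend_image by (intro open_Int open_cyl open_vimage continuous_drop_seq)

lemma open_prepend_vimage: "open U \<Longrightarrow> open (prepend w -` U)"
  by (intro open_vimage continuous_prepend)

lemma strict_prefix_pre: "strict_prefix u (pre k x) \<Longrightarrow> \<exists>j<k. u = pre j x"
proof -
  assume a: "strict_prefix u (pre k x)"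
  then obtain zs where zs: "pre k x = u @ zs" by (auto simp: strict_prefix_def prefix_def)
  have lk: "length u < k" using prefix_length_less[OF a] by simp
  have "u = take (length u) (pre k x)" using zs by simp
  also have "\<dots> = pre (length u) x" using lk by (simp add: pre_def take_map take_upt)
  finally show ?thesis using lk by blast
qed

lemma minimal_pre_in:
  assumes "pre n x \<in> W"
  shows "\<exists>k. pre k x \<in> W \<and> (\<forall>u. strict_prefix u (pre k x) \<longrightarrow> u \<notin> W)"
proof -
  define k where "k = (LEAST k. pre k x \<in> W)"
  have "pre k x \<in> W" unfolding k_def using assms by (rule LeastI)
  moreover have "u \<notin> W" if "strict_prefix u (pre k x)" for u
    using strict_prefix_pre[OF that] not_less_Least[of _ "\<lambda>k. pre k x \<in> W"]
    unfolding k_def by blast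
  ultimately show ?thesis by blast
qed


section \<open>Parity of ordinals\<close>

lemma pred_unique: "is_succ (x::'a::wellorder) y \<Longrightarrow> is_succ x' y \<Longrightarrow> x = x'"
  unfolding is_succ_def by (metis linorder_neqE)

lemma is_succ_less: "is_succ (b::'a::wellorder) b' \<Longrightarrow> c < b' \<longleftrightarrow> c \<le> b"
  unfolding is_succ_def by (meson le_less_trans not_le)

lemma succ_ex: "(b::'a::wellorder) < a \<Longrightarrow> \<exists>b'. is_succ b b' \<and> b' \<le> a"
proof -
  assume "b < a"
  define s where "s = (LEAST z. b < z)"
  have "b < s" unfolding s_def using \<open>b < a\<close> by (rule LeastI)
  moreover have "s \<le> a" unfolding s_def using \<open>b < a\<close> by (rule Least_le)
  moreover have "\<not> (\<exists>z. b < z \<and> z < s)" unfolding s_def using not_less_Least by blast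
  ultimately show ?thesis unfolding is_succ_def by blast
qed

lemma plus_fin_ex: "\<exists>l n. is_limit l \<and> plus_fin l n (b::'a::wellorder)"
proof (induction b rule: less_induct)
  case (less b)
  show ?case
  proof (cases "is_limit b")
    case True then show ?thesis using plus_fin.base by blast
  next
    case False
    then obtain x where x: "is_succ x b" unfolding is_limit_def by blast
    then have "x < b" unfolding is_succ_def by simp
    then obtain l n where "is_limit l" "plus_fin l n x" using less by blast
    then show ?thesis using plus_fin.step[OF _ x] by blast
  qed
qed

lemma plus_fin_unique:
  "plus_fin l n (b::'a::wellorder) \<Longrightarrow> is_limit l \<Longrightarrow> plus_fin l' n' b \<Longrightarrow> is_limit l' \<Longrightarrow> n = n'"
proof (induction arbitrary: n' rule: plus_fin.induct)
  case (base l)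
  from base(2) show ?case
  proof cases
    case (step n x) then show ?thesis using base(1) unfolding is_limit_def by blast
  qed simp
next
  case (step l n x y)
  from step.prems(2) show ?case
  proof cases
    case base then show ?thesis using step.hyps(2) step.prems(3) unfolding is_limit_def by blast
  next
    case (step m x')
    then have "x' = x" using pred_unique \<open>is_succ x y\<close> by blast
    then have "n = m" using step.IH step.prems(1,3) \<open>plus_fin l' m x'\<close> by blast
    then show ?thesis using step by simp
  qed
qed

lemma par_eq:
  assumes "is_limit l" "plus_fin l n (b::'a::wellorder)"
  shows "par b = (if even n then 0 else 1)"
proof -
  have "(\<exists>l' n'. is_limit l' \<and> even n' \<and> plus_fin l' n' b) \<longleftrightarrow> even n"
    using assms plus_fin_unique by blast
  then show ?thesis unfolding par_def by simp
qed

lemma par_succ: "is_succ (b::'a::wellorder) b' \<Longrightarrow> par b' \<noteq> par b"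
proof -
  assume s: "is_succ b b'"
  obtain l n where ln: "is_limit l" "plus_fin l n b" using plus_fin_ex by blast
  have "plus_fin l (Suc n) b'" using plus_fin.step[OF ln(2) s] .
  then show ?thesis using par_eq[OF ln] par_eq[OF ln(1)] by simp
qed

lemma par_01: "par b = 0 \<or> par b = 1"
  by (simp add: par_def)

lemma par_neq_iff: "par b \<noteq> par a \<Longrightarrow> par x \<noteq> par b \<longleftrightarrow> par x = par a"
  using par_01[of x] par_01[of a] par_01[of b] by auto

lemma par_succ_iff: "is_succ (b::'a::wellorder) b' \<Longrightarrow> par x \<noteq> par b' \<longleftrightarrow> par x = par b"
  by (rule par_neq_iff[OF par_succ])

text \<open>For m < a the interval [m, a) contains an ordinal of parity opposite to a: m itself or its
  successor.\<close>
lemma opposite_parity_below: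
  assumes "(m::'a::wellorder) < a"
  obtains b where "m \<le> b" "b < a" "par b \<noteq> par a"
proof (cases "par m = par a")
  case True
  obtain t where t: "is_succ m t" "t \<le> a" using succ_ex[OF assms] by blast
  then have "par t \<noteq> par a" using par_succ[OF t(1)] True by simp
  then have "t \<noteq> a" by blast
  then have "t < a" using t(2) by simp
  moreover have "m \<le> t" using t(1) unfolding is_succ_def by (simp add: less_imp_le)
  ultimately show ?thesis using that \<open>par t \<noteq> par a\<close> by blast
qed (use assms that in blast)


section \<open>The rank of a point\<close>

lemma rank_props:
  fixes U :: "'a::wellorder \<Rightarrow> cantor set"
  shows rank_le: "rank_in U a x \<le> a"
    and rank_mem: "rank_in U a x < a \<Longrightarrow> x \<in> U (rank_in U a x)"
    and rank_min: "c < rank_in U a x \<Longrightarrow> x \<notin> U c"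
proof -
  have "rank_in U a x \<le> a \<and> (rank_in U a x < a \<longrightarrow> x \<in> U (rank_in U a x)) \<and>
        (\<forall>c. c < rank_in U a x \<longrightarrow> x \<notin> U c)"
  proof (cases "\<exists>b<a. x \<in> U b")
    case True
    define r where "r = (LEAST b. b < a \<and> x \<in> U b)"
    have r: "rank_in U a x = r" using True by (simp add: rank_in_def r_def)
    have "r < a \<and> x \<in> U r" unfolding r_def using True by (metis (mono_tags, lifting) LeastI)
    moreover have "x \<notin> U c" if "c < r" for c
      using not_less_Least[OF that[unfolded r_def]] that \<open>r < a \<and> x \<in> U r\<close> less_trans by blast
    ultimately show ?thesis using r by auto
  next
    case False
    then show ?thesis by (auto simp: rank_in_def)
  qed
  then show "rank_in U a x \<le> a" "rank_in U a x < a \<Longrightarrow> x \<in> U (rank_in U a x)"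
    "c < rank_in U a x \<Longrightarrow> x \<notin> U c" by auto
qed

lemma rank_eqI:
  fixes U :: "'a::wellorder \<Rightarrow> cantor set"
  assumes "r \<le> a" "r < a \<Longrightarrow> x \<in> U r" "\<And>c. c < r \<Longrightarrow> x \<notin> U c"
  shows "rank_in U a x = r"
proof (rule ccontr)
  let ?s = "rank_in U a x"
  assume "?s \<noteq> r"
  then consider "?s < r" | "r < ?s" by fastforce
  then show False
  proof cases
    case 1
    then have "x \<in> U ?s" using assms(1) by (intro rank_mem) simp
    then show False using assms(3)[OF 1] by blast
  next
    case 2
    then have "r < a" using rank_le[of U a x] by simp
    then show False using assms(2) rank_min[OF 2] by blast
  qed
qed

lemma rank_le_of_mem: "m < a \<Longrightarrow> x \<in> U m \<Longrightarrow> rank_in U a x \<le> m"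
  using rank_min not_le by blast

lemma rank_cong:
  fixes U V :: "'a::wellorder \<Rightarrow> cantor set"
  assumes "\<And>b. b < a \<Longrightarrow> x \<in> U b \<longleftrightarrow> y \<in> V b"
  shows "rank_in U a x = rank_in V a y"
proof (rule rank_eqI)
  show "rank_in V a y \<le> a" by (rule rank_le)
  show "x \<in> U (rank_in V a y)" if "rank_in V a y < a"
    using rank_mem[OF that] assms[OF that] by blast
  fix c assume "c < rank_in V a y"
  then show "x \<notin> U c" using rank_min[of c V a y] rank_le[of V a y] assms by fastforce
qed

lemma rank_truncate:
  assumes "rank_in U a x \<le> b" "b \<le> (a::'a::wellorder)"
  shows "rank_in U b x = rank_in U a x"
proof (rule rank_eqI)
  show "rank_in U a x \<le> b" by (fact assms(1))
  show "x \<in> U (rank_in U a x)" if "rank_in U a x < b"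
    using that assms(2) by (intro rank_mem) simp
qed (rule rank_min)


section \<open>Closure properties of the levels\<close>

definition diff_set :: "('a::wellorder \<Rightarrow> cantor set) \<Rightarrow> 'a \<Rightarrow> cantor set" where
  "diff_set U a = {x. par (rank_in U a x) \<noteq> par a}"

lemma Diff_level_iff:
  "S \<in> Diff_level a \<longleftrightarrow> (\<exists>U. (\<forall>b<a. open (U b)) \<and> S = diff_set U a)"
  by (simp add: Diff_level_def diff_set_def)

text \<open>Points of diff_set U a have rank below a (rank a has the parity of a).\<close>
lemma diff_set_rank_less: "x \<in> diff_set U a \<Longrightarrow> rank_in U a x < a"
  using rank_le[of U a x] by (auto simp: diff_set_def order.order_iff_strict)

text \<open>The complement of a set of level b has level b + 1: add the whole space as last set.\<close>
lemma Diff_level_compl_succ: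
  fixes b b' :: "'a::{wellorder,countable}"
  assumes s: "is_succ b b'" and S: "S \<in> Diff_level b"
  shows "- S \<in> Diff_level b'"
proof -
  obtain U where U: "\<forall>c<b. open (U c)" "S = diff_set U b"
    using S Diff_level_iff by blast
  define U' where "U' = (\<lambda>c. if c < b then U c else UNIV)"
  have bb: "b < b'" using s by (simp add: is_succ_def)
  have rk: "rank_in U' b' x = rank_in U b x" for x
  proof (rule rank_eqI)
    show "rank_in U b x \<le> b'" using rank_le[of U b x] bb by simp
    show "x \<in> U' (rank_in U b x)"
      using rank_mem[of U b x] by (auto simp: U'_def)
    fix c assume "c < rank_in U b x"
    then show "x \<notin> U' c" using rank_min[of c U b x] rank_le[of U b x] by (simp add: U'_def)
  qed
  have "x \<in> - S \<longleftrightarrow> x \<in> diff_set U' b'" for x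
    using U(2) rk[of x] par_succ_iff[OF s, of "rank_in U b x"] by (simp add: diff_set_def)
  then have "- S = diff_set U' b'" by blast
  moreover have "\<forall>c<b'. open (U' c)" using U(1) by (simp add: U'_def)
  ultimately show ?thesis using Diff_level_iff by blast
qed

text \<open>Levels of equal parity are increasing: pad with empty sets.\<close>
lemma Diff_level_pad:
  fixes c a :: "'a::{wellorder,countable}"
  assumes ca: "c \<le> a" and p: "par c = par a" and S: "S \<in> Diff_level c"
  shows "S \<in> Diff_level a"
proof -
  obtain U where U: "\<forall>d<c. open (U d)" "S = diff_set U c"
    using S Diff_level_iff by blast
  define U' where "U' = (\<lambda>d. if d < c then U d else {})"
  have rk: "rank_in U' a x = (if rank_in U c x < c then rank_in U c x else a)" for x
  proof (rule rank_eqI)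
    let ?r = "rank_in U c x"
    show "(if ?r < c then ?r else a) \<le> a" using ca by auto
    show "x \<in> U' (if ?r < c then ?r else a)" if "(if ?r < c then ?r else a) < a"
      using that rank_mem[of U c x] by (auto simp: U'_def split: if_splits)
    fix d assume d: "d < (if ?r < c then ?r else a)"
    show "x \<notin> U' d"
    proof (cases "d < c")
      case True
      then have "d < ?r" using d rank_le[of U c x] by (auto split: if_splits)
      then show ?thesis using rank_min[of d U c x] by (simp add: U'_def)
    qed (simp add: U'_def)
  qed
  have "x \<in> S \<longleftrightarrow> x \<in> diff_set U' a" for x
  proof (cases "rank_in U c x < c")
    case False
    then have "rank_in U c x = c" using rank_le[of U c x] by simp
    then show ?thesis using U(2) rk[of x] by (simp add: diff_set_def)
  qed (use U(2) rk[of x] p in \<open>simp add: diff_set_def\<close>)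
  then have "S = diff_set U' a" by blast
  moreover have "\<forall>d<a. open (U' d)" using U(1) by (simp add: U'_def)
  ultimately show ?thesis using Diff_level_iff by blast
qed

text \<open>A set of level c also has level c + 1: shift all indices up by one, taking U' d to be the
  union of the U e with e < d, so that every rank increases by exactly one.\<close>
lemma Diff_level_succ:
  fixes c c' :: "'a::{wellorder,countable}"
  assumes s: "is_succ c c'" and S: "S \<in> Diff_level c"
  shows "S \<in> Diff_level c'"
proof -
  obtain U where U: "\<forall>d<c. open (U d)" "S = diff_set U c"
    using S Diff_level_iff by blast
  define U' where "U' = (\<lambda>d. \<Union>e\<in>{e. e < d \<and> e < c}. U e)"
  have cc: "c < c'" using s by (simp add: is_succ_def)
  have "x \<in> diff_set U' c' \<longleftrightarrow> x \<in> diff_set U c" for x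
  proof -
    let ?r = "rank_in U c x"
    obtain t where t: "is_succ ?r t" "t \<le> c'"
      using succ_ex[of ?r c'] rank_le[of U c x] cc by fastforce
    have "rank_in U' c' x = t"
    proof (rule rank_eqI)
      show "t \<le> c'" by (fact t(2))
      show "x \<in> U' t" if "t < c'"
      proof -
        have "?r < t" using t(1) by (simp add: is_succ_def)
        moreover have "t \<le> c" using that is_succ_less[OF s] by simp
        ultimately have "?r < c" by (rule less_le_trans)
        then have "x \<in> U ?r" by (rule rank_mem)
        then show ?thesis unfolding U'_def using \<open>?r < t\<close> \<open>?r < c\<close> by blast
      qed
      fix d assume "d < t"
      show "x \<notin> U' d"
      proof
        assume "x \<in> U' d"
        then obtain e where "e < d" "x \<in> U e" unfolding U'_def by blast
        then have "?r \<le> e" using rank_min[of e U c x] not_le by blast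
        then have "?r < d" using \<open>e < d\<close> by (rule le_less_trans)
        then show False using t(1) \<open>d < t\<close> unfolding is_succ_def by blast
      qed
    qed
    moreover have "par t \<noteq> par c' \<longleftrightarrow> par ?r \<noteq> par c"
      using par_succ_iff[OF s, of t] par_succ_iff[OF t(1), of c] by argo
    ultimately show ?thesis by (simp add: diff_set_def)
  qed
  then have "S = diff_set U' c'" unfolding U(2) by blast
  moreover have "\<forall>d<c'. open (U' d)" unfolding U'_def using U(1) by (auto intro!: open_Union)
  ultimately show ?thesis using Diff_level_iff by blast
qed

text \<open>Levels are increasing: combine padding with a one-step shift when the parities differ.\<close>
lemma Diff_level_mono:
  fixes c a :: "'a::{wellorder,countable}"
  assumes "c \<le> a" shows "Diff_level c \<subseteq> Diff_level a"
proof (cases "par c = par a")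
  case True then show ?thesis using Diff_level_pad assms by blast
next
  case False
  then have "c \<noteq> a" by blast
  then have "c < a" using assms by simp
  then obtain c' where c': "is_succ c c'" "c' \<le> a" using succ_ex by blast
  have "par c' = par a" using par_succ_iff[OF c'(1), of a] False by simp
  then show ?thesis using Diff_level_pad[OF c'(2)] Diff_level_succ[OF c'(1)] by blast
qed

lemma co_class_lower_levels:
  fixes a :: "'a::{wellorder,countable}"
  shows "co_class (\<Union>b\<in>{b. b < a}. Diff_level b) \<subseteq> Diff_level a"
proof
  fix X assume "X \<in> co_class (\<Union>b\<in>{b. b < a}. Diff_level b)"
  then obtain Y b where Y: "X = - Y" "b < a" "Y \<in> Diff_level b" by (auto simp: co_class_def)
  obtain b' where b': "is_succ b b'" "b' \<le> a" using succ_ex[OF Y(2)] by blast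
  then show "X \<in> Diff_level a"
    using Diff_level_compl_succ[OF b'(1) Y(3)] Diff_level_mono[OF b'(2)] Y(1) by blast
qed

lemma lower_levels_succ:
  fixes a a' :: "'a::{wellorder,countable}"
  assumes s: "is_succ a a'"
  shows "(\<Union>b\<in>{b. b < a'}. Diff_level b) = Diff_level a"
proof
  have "Diff_level b \<subseteq> Diff_level a" if "b < a'" for b
    using that is_succ_less[OF s] by (simp add: Diff_level_mono)
  then show "(\<Union>b\<in>{b. b < a'}. Diff_level b) \<subseteq> Diff_level a" by blast
  have "a < a'" using s by (simp add: is_succ_def)
  then show "Diff_level a \<subseteq> (\<Union>b\<in>{b. b < a'}. Diff_level b)" by blast
qed


section \<open>The operator D_of\<close>

lemma co_classI: "X \<in> \<Gamma> \<Longrightarrow> - X \<in> co_class \<Gamma>"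
  by (auto simp: co_class_def)

lemma D_of_iff:
  "S \<in> D_of \<Gamma> \<longleftrightarrow> (\<exists>I v U. S = (\<Union>i\<in>I. prepend (v i) ` (U i)) \<and>
       I \<subseteq> (UNIV :: nat set) \<and> (\<forall>i\<in>I. U i \<in> \<Gamma>) \<and>
       (\<forall>i\<in>I. \<forall>j\<in>I. i \<noteq> j \<longrightarrow> \<not> prefix (v i) (v j) \<and> \<not> prefix (v j) (v i)))"
  unfolding D_of_def mem_Collect_eq by (rule refl)

lemma D_of_mono: "\<Gamma> \<subseteq> \<Delta> \<Longrightarrow> D_of \<Gamma> \<subseteq> D_of \<Delta>"
  unfolding D_of_def by blast

lemma mem_prepend_union:
  assumes inc: "\<forall>i\<in>I. \<forall>j\<in>I. i \<noteq> j \<longrightarrow> \<not> prefix (v i) (v j) \<and> \<not> prefix (v j) (v i)"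
    and i: "i \<in> I"
  shows "prepend (v i) p \<in> (\<Union>j\<in>I. prepend (v j) ` X j) \<longleftrightarrow> p \<in> X i"
proof
  assume "prepend (v i) p \<in> (\<Union>j\<in>I. prepend (v j) ` X j)"
  then obtain j q where j: "j \<in> I" "q \<in> X j" "prepend (v i) p = prepend (v j) q" by blast
  then have "j = i" using prepend_eq_imp_comparable[OF j(3)] inc i by blast
  then show "p \<in> X i" using prepend_inj j by blast
qed (use i in blast)

text \<open>Each level is closed under D_of: glue the witnessing families of the pieces.\<close>
lemma D_of_Diff_level:
  fixes a :: "'a::{wellorder,countable}"
  shows "D_of (Diff_level a) \<subseteq> Diff_level a"
proof
  fix S assume "S \<in> D_of (Diff_level a)"
  then obtain I :: "nat set" and v W where S: "S = (\<Union>i\<in>I. prepend (v i) ` W i)"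
    and W: "\<forall>i\<in>I. W i \<in> Diff_level a"
    and inc: "\<forall>i\<in>I. \<forall>j\<in>I. i \<noteq> j \<longrightarrow> \<not> prefix (v i) (v j) \<and> \<not> prefix (v j) (v i)"
    unfolding D_of_iff by blast
  have "\<forall>i\<in>I. \<exists>U. (\<forall>b<a. open (U b)) \<and> W i = diff_set U a"
    using W Diff_level_iff by blast
  then obtain F where F: "\<forall>i\<in>I. (\<forall>b<a. open (F i b)) \<and> W i = diff_set (F i) a"
    by (rule bchoice[THEN exE]) blast
  define U where "U = (\<lambda>b. \<Union>i\<in>I. prepend (v i) ` F i b)"
  have "x \<in> S \<longleftrightarrow> x \<in> diff_set U a" for x
  proof (cases "\<exists>i\<in>I. \<exists>p. x = prepend (v i) p")
    case True
    then obtain i p where ip: "i \<in> I" "x = prepend (v i) p" by blast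
    have "rank_in U a x = rank_in (F i) a p"
      by (rule rank_cong) (unfold U_def ip(2), rule mem_prepend_union[OF inc ip(1)])
    moreover have "x \<in> S \<longleftrightarrow> p \<in> W i"
      unfolding S ip(2) by (rule mem_prepend_union[OF inc ip(1)])
    ultimately show ?thesis using F ip(1) by (auto simp: diff_set_def)
  next
    case False
    then have "rank_in U a x = a" by (intro rank_eqI) (auto simp: U_def)
    then show ?thesis using False by (auto simp: S diff_set_def)
  qed
  moreover have "\<forall>b<a. open (U b)"
    unfolding U_def using F by (auto intro!: open_UN open_prepend_image)
  ultimately show "S \<in> Diff_level a" using Diff_level_iff by blast
qed


section \<open>Decomposition of a level along minimal cylinders\<close>

text \<open>A set covered by the cylinders of a prefix-free set M of words belongs to D_of \<Gamma> as soon as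
  its sections over the words of M belong to \<Gamma>.  (M is countable, so it can be indexed by nat.)\<close>
lemma D_of_prefix_free_cover:
  fixes M :: "bool list set"
  assumes anti: "\<And>w w'. w \<in> M \<Longrightarrow> w' \<in> M \<Longrightarrow> w \<noteq> w' \<Longrightarrow> \<not> prefix w w'"
    and cover: "\<And>x. x \<in> S \<Longrightarrow> \<exists>w\<in>M. x \<in> cyl w"
    and sect: "\<And>w. w \<in> M \<Longrightarrow> {p. prepend w p \<in> S} \<in> \<Gamma>"
  shows "S \<in> D_of \<Gamma>"
proof -
  define I where "I = to_nat ` M"
  define v :: "nat \<Rightarrow> bool list" where "v = from_nat"
  define T where "T = (\<lambda>i. {p. prepend (v i) p \<in> S})"
  have vI: "v i \<in> M" "to_nat (v i) = i" if "i \<in> I" for i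
    using that by (auto simp: I_def v_def)
  have "S = (\<Union>i\<in>I. prepend (v i) ` T i)"
  proof
    show "S \<subseteq> (\<Union>i\<in>I. prepend (v i) ` T i)"
    proof
      fix x assume "x \<in> S"
      then obtain w where w: "w \<in> M" "x \<in> cyl w" using cover by blast
      have i: "to_nat w \<in> I" using w(1) by (simp add: I_def)
      have vw: "v (to_nat w) = w" by (simp add: v_def)
      have x: "x = prepend w (drop_seq (length w) x)" using prepend_drop_seq[OF w(2)] ..
      then have "drop_seq (length w) x \<in> T (to_nat w)"
        using \<open>x \<in> S\<close> vw unfolding T_def by simp
      then have "x \<in> prepend (v (to_nat w)) ` T (to_nat w)" using x vw by (metis image_eqI)
      then show "x \<in> (\<Union>i\<in>I. prepend (v i) ` T i)" using i by blast
    qed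
  qed (auto simp: T_def)
  moreover have "\<forall>i\<in>I. T i \<in> \<Gamma>" using sect vI unfolding T_def by blast
  moreover have "\<forall>i\<in>I. \<forall>j\<in>I. i \<noteq> j \<longrightarrow> \<not> prefix (v i) (v j) \<and> \<not> prefix (v j) (v i)"
  proof (intro ballI impI)
    fix i j assume "i \<in> I" "j \<in> I" "i \<noteq> j"
    then have "v i \<noteq> v j" using vI by metis
    then show "\<not> prefix (v i) (v j) \<and> \<not> prefix (v j) (v i)"
      using anti vI \<open>i \<in> I\<close> \<open>j \<in> I\<close> by metis
  qed
  ultimately show ?thesis unfolding D_of_iff by blast
qed

text \<open>Over a cylinder contained in U m, m < a, the points of diff_set U a have rank \<le> m; hence the
  complement of the section is a set of level b for any b \<in> [m, a) of parity opposite to a.\<close>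
lemma section_compl_lower_level:
  fixes a m :: "'a::{wellorder,countable}"
  assumes U: "\<forall>b<a. open (U b)" and m: "m < a" "cyl w \<subseteq> U m"
  shows "- {p. prepend w p \<in> diff_set U a} \<in> (\<Union>b\<in>{b. b < a}. Diff_level b)"
proof -
  obtain b where b: "m \<le> b" "b < a" "par b \<noteq> par a"
    using opposite_parity_below[OF m(1)] by blast
  define V where "V = (\<lambda>c. prepend w -` U c)"
  have "rank_in V b p = rank_in U a (prepend w p)" for p
  proof -
    have "rank_in U a (prepend w p) \<le> b"
      using rank_le_of_mem[OF m(1)] m(2) prepend_in_cyl b(1) by (meson order.trans subsetD)
    then have "rank_in U b (prepend w p) = rank_in U a (prepend w p)"
      using b(2) by (intro rank_truncate) simp_all
    moreover have "rank_in V b p = rank_in U b (prepend w p)"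
      by (rule rank_cong) (simp add: V_def)
    ultimately show ?thesis by simp
  qed
  then have "p \<in> - {p. prepend w p \<in> diff_set U a} \<longleftrightarrow> p \<in> diff_set V b" for p
    using par_neq_iff[OF b(3), of "rank_in U a (prepend w p)"] by (simp add: diff_set_def)
  then have "- {p. prepend w p \<in> diff_set U a} = diff_set V b" by blast
  moreover have "\<forall>c<b. open (V c)" unfolding V_def using U b(2) open_prepend_vimage by simp
  ultimately show ?thesis using b(2) Diff_level_iff by blast
qed

lemma Diff_level_decompose:
  fixes a :: "'a::{wellorder,countable}"
  shows "Diff_level a \<subseteq> D_of (co_class (\<Union>b\<in>{b. b < a}. Diff_level b))"
proof
  fix S assume "S \<in> Diff_level a"
  then obtain U where U: "\<forall>b<a. open (U b)" and S: "S = diff_set U a"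
    using Diff_level_iff by blast
  define W where "W = {w. \<exists>m<a. cyl w \<subseteq> U m}"
  define M where "M = {w \<in> W. \<forall>u. strict_prefix u w \<longrightarrow> u \<notin> W}"
  show "S \<in> D_of (co_class (\<Union>b\<in>{b. b < a}. Diff_level b))"
  proof (rule D_of_prefix_free_cover)
    show "\<not> prefix w w'" if "w \<in> M" "w' \<in> M" "w \<noteq> w'" for w w'
      using that strict_prefixI unfolding M_def by blast
    show "\<exists>w\<in>M. x \<in> cyl w" if "x \<in> S" for x
    proof -
      have r: "rank_in U a x < a" using that S diff_set_rank_less by blast
      then have "open (U (rank_in U a x))" "x \<in> U (rank_in U a x)"
        using U by (auto intro: rank_mem)
      then obtain n where "cyl (pre n x) \<subseteq> U (rank_in U a x)"
        using open_contains_cyl by blast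
      then have "pre n x \<in> W" using r unfolding W_def by blast
      then show ?thesis using minimal_pre_in[of n x W] cyl_pre_self unfolding M_def by blast
    qed
    show "{p. prepend w p \<in> S} \<in> co_class (\<Union>b\<in>{b. b < a}. Diff_level b)" if "w \<in> M" for w
    proof -
      obtain m where "m < a" "cyl w \<subseteq> U m" using \<open>w \<in> M\<close> unfolding M_def W_def by blast
      then have "- {p. prepend w p \<in> S} \<in> (\<Union>b\<in>{b. b < a}. Diff_level b)"
        unfolding S by (rule section_compl_lower_level[OF U])
      then have "- (- {p. prepend w p \<in> S}) \<in> co_class (\<Union>b\<in>{b. b < a}. Diff_level b)"
        by (rule co_classI)
      then show ?thesis by simp
    qed
  qed
qed


theorem lemma6:
  fixes dummy :: "'a::{wellorder,countable}"
  shows "(\<forall>a a' :: 'a. is_succ a a' \<longrightarrow> Diff_level a' = D_of (co_class (Diff_level a)))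
       \<and> (\<forall>a :: 'a. (\<exists>b. b < a) \<longrightarrow>
            Diff_level a = D_of (co_class (\<Union>b\<in>{b. b < a}. Diff_level b)))"
proof -
  have levels: "Diff_level a = D_of (co_class (\<Union>b\<in>{b. b < a}. Diff_level b))" for a :: 'a
  proof
    have "D_of (co_class (\<Union>b\<in>{b. b < a}. Diff_level b)) \<subseteq> D_of (Diff_level a)"
      by (rule D_of_mono[OF co_class_lower_levels])
    then show "D_of (co_class (\<Union>b\<in>{b. b < a}. Diff_level b)) \<subseteq> Diff_level a"
      using D_of_Diff_level by blast
  qed (rule Diff_level_decompose)
  moreover have "Diff_level a' = D_of (co_class (Diff_level a))" if "is_succ a a'" for a a' :: 'a
    using levels[of a'] lower_levels_succ[OF that] by simp
  ultimately show ?thesis by blast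
qed

end
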